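(* Let $H$ be a $p$-variate cumulative distribution function with continuous margins $F_1,\ldots,F_p$, let $\hat H_n$ be random $p$-variate cumulative distribution functions and $\hat F_{n,1},\ldots,\hat F_{n,p}$ random univariate cumulative distribution functions, and suppose there exists $0<r_n\to\infty$ such that, in $\ell^\infty(\mathbb R^p)\times\ell^\infty(\mathbb R)\times\cdots\times\ell^\infty(\mathbb R)$ with the topology of uniform convergence, \[\bigl(r_n(\hat H_n-H);\,r_n(\hat F_{n,1}-F_1),\ldots,r_n(\hat F_{n,p}-F_p)\bigr)\rightsquigarrow(\alpha\circ\mathbf F;\,\beta_1\circ F_1,\ldots,\beta_p\circ F_p),\qquad n\to\infty,\] where $\alpha$ is a random element of $\ell^\infty([0,1]^p)$ and $\beta_j$ random elements of $\ell^\infty([0,1])$ such that $\alpha\circ\mathbf F$ and $\beta_j\circ F_j$ have continuous trajectories on $[-\infty,\infty]^p$ and $[-\infty,\infty]$, respectively, almost surely. Then, with probability one, the trajectories of $\alpha$ and $\beta_1,\ldots,\beta_p$ are continuous (on $[0,1]^p$ and $[0,1]$ respectively).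
   Context: $\mathbf F(\mathbf x)=(F_1(x_1),\ldots,F_p(x_p))$, with $F_j(-\infty)=0$, $F_j(+\infty)=1$. $\ell^\infty(T)$ is the space of bounded real functions on $T$ with the supremum norm; $\rightsquigarrow$ denotes Hoffmann-Jørgensen weak convergence. *)

theory Defs
  imports "HOL-Probability.Probability"
begin

definition mcdf :: "(real^'p::finite) measure \<Rightarrow> real^'p \<Rightarrow> real" where
  "mcdf \<mu> = (\<lambda>x. measure \<mu> {y. \<forall>j. y $ j \<le> x $ j})"

definition is_mcdf :: "(real^'p::finite \<Rightarrow> real) \<Rightarrow> bool" where
  "is_mcdf G \<longleftrightarrow> (\<exists>\<mu>. prob_space \<mu> \<and> sets \<mu> = sets borel \<and> G = mcdf \<mu>)"

definition is_cdf :: "(real \<Rightarrow> real) \<Rightarrow> bool" where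
  "is_cdf G \<longleftrightarrow> (\<exists>\<mu>. real_distribution \<mu> \<and> G = cdf \<mu>)"

definition ext_cdf :: "(real \<Rightarrow> real) \<Rightarrow> ereal \<Rightarrow> real" where
  "ext_cdf G x = (if x = -\<infinity> then 0 else if x = \<infinity> then 1 else G (real_of_ereal x))"

definition linf :: "('t \<Rightarrow> real) set" where
  "linf = {f. bounded (range f)}"

definition sup_dist :: "('t \<Rightarrow> real) \<Rightarrow> ('t \<Rightarrow> real) \<Rightarrow> real" where
  "sup_dist f g = (SUP t. \<bar>f t - g t\<bar>)"

definition bc_functional :: "(('t \<Rightarrow> real) \<Rightarrow> real) \<Rightarrow> bool" where
  "bc_functional h \<longleftrightarrow> bounded (h ` linf) \<and>
     (\<forall>f\<in>linf. \<forall>e>0. \<exists>d>0. \<forall>g\<in>linf. sup_dist f g < d \<longrightarrow> \<bar>h f - h g\<bar> < e)"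

definition outer_exp :: "'w measure \<Rightarrow> ('w \<Rightarrow> real) \<Rightarrow> real" where
  "outer_exp M X = Inf {integral\<^sup>L M U | U. integrable M U \<and> (\<forall>\<omega>\<in>space M. X \<omega> \<le> U \<omega>)}"

definition hj_weak_conv ::
  "(nat \<Rightarrow> 'w measure) \<Rightarrow> (nat \<Rightarrow> 'w \<Rightarrow> 't \<Rightarrow> real) \<Rightarrow> 'v measure \<Rightarrow> ('v \<Rightarrow> 't \<Rightarrow> real) \<Rightarrow> bool"
where
  "hj_weak_conv Mn X M Y \<longleftrightarrow>
     (\<forall>h :: ('t \<Rightarrow> real) \<Rightarrow> real. bc_functional h \<longrightarrow>
        (\<lambda>n. outer_exp (Mn n) (\<lambda>\<omega>. h (X n \<omega>))) \<longlonglongrightarrow> outer_exp M (\<lambda>\<omega>. h (Y \<omega>)))"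

end

theory Submission
  imports Defs
begin

(*
  The map x \<mapsto> (F\<^sub>1 x\<^sub>1, \<dots>, F\<^sub>p x\<^sub>p), extended to [-\<infinity>,\<infinity>]\<^sup>p by F\<^sub>j(-\<infinity>) = 0 and
  F\<^sub>j(\<infinity>) = 1, is continuous because the margins are, and it maps onto [0,1]\<^sup>p by the
  intermediate value theorem. A continuous surjection from a compact space onto a Hausdorff
  space is a quotient map, so a function on [0,1]\<^sup>p is continuous as soon as its composition
  with the map is. Applied to the trajectories of \<alpha> and \<beta>\<^sub>j this is the claim.
*)

lemma continuous_map_product_topology_vec_lambda:
  "continuous_map (product_topology (\<lambda>_. euclidean) UNIV)
     (euclidean :: ('a::topological_space ^ 'n::finite) topology) vec_lambda"
  unfolding continuous_map_openin_preimage_eq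
proof (intro conjI allI impI)
  fix U :: "('a ^ 'n) set"
  assume "openin euclidean U"
  then have U: "open U" by simp
  show "openin (product_topology (\<lambda>_. euclidean) UNIV)
          (topspace (product_topology (\<lambda>_. euclidean) UNIV) \<inter> vec_lambda -` U)"
    unfolding openin_product_topology_alt
  proof (intro conjI ballI)
    fix x :: "'n \<Rightarrow> 'a"
    assume "x \<in> topspace (product_topology (\<lambda>_. euclidean) UNIV) \<inter> vec_lambda -` U"
    then have "vec_lambda x \<in> U" by simp
    then obtain A where A: "\<And>i. open (A i)" "\<And>i. x i \<in> A i"
        and AU: "\<And>y. (\<forall>i. y $ i \<in> A i) \<Longrightarrow> y \<in> U"
      using U unfolding open_vec_def by (metis vec_lambda_beta)
    show "\<exists>V. finite {i \<in> UNIV. V i \<noteq> topspace euclidean} \<and> (\<forall>i\<in>UNIV. openin euclidean (V i)) \<and>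
           x \<in> Pi\<^sub>E UNIV V \<and> Pi\<^sub>E UNIV V \<subseteq> topspace (product_topology (\<lambda>_. euclidean) UNIV) \<inter> vec_lambda -` U"
      using A AU by (intro exI[of _ A]) (auto simp: PiE_iff)
  qed
qed simp

lemma compact_UNIV_vec:
  assumes "compact (UNIV :: 'a::topological_space set)"
  shows "compact (UNIV :: ('a ^ 'n::finite) set)"
proof -
  let ?X = "product_topology (\<lambda>_::'n. euclidean :: 'a topology) UNIV"
  have "compact_space ?X"
    using assms by (subst compact_space_product_topology) (simp add: compact_space_def)
  then have "compactin euclidean (vec_lambda ` topspace ?X)"
    unfolding compact_space_def
    by (rule image_compactin[OF _ continuous_map_product_topology_vec_lambda])
  moreover have "vec_lambda ` topspace ?X = UNIV"
    using surjI[of vec_lambda vec_nth] by (simp add: PiE_UNIV_domain vec_nth_inverse)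
  ultimately show ?thesis by simp
qed

lemma continuous_on_through_compact_surjection:
  fixes G :: "'a::topological_space \<Rightarrow> 'b::t2_space" and f :: "'b \<Rightarrow> 'c::topological_space"
  assumes "compact S" and "continuous_on S G" and "G ` S = T"
    and "continuous_on S (f \<circ> G)"
  shows "continuous_on T f"
  unfolding continuous_closedin_preimage_eq
proof (intro allI impI)
  fix C :: "'c set"
  assume "closed C"
  then have "closedin (top_of_set S) (S \<inter> (f \<circ> G) -` C)"
    using assms(4) continuous_closedin_preimage_eq by blast
  then have "compact (S \<inter> (f \<circ> G) -` C)"
    using \<open>compact S\<close> closedin_compact by blast
  then have "closed (G ` (S \<inter> (f \<circ> G) -` C))"
    by (meson assms(2) compact_continuous_image compact_imp_closed continuous_on_subset inf_le1)
  moreover have "G ` (S \<inter> (f \<circ> G) -` C) = T \<inter> f -` C"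
    using assms(3) by auto
  ultimately show "closedin (top_of_set T) (T \<inter> f -` C)"
    by (metis closedin_closed_Int inf.absorb_iff2 inf_le1)
qed

context real_distribution
begin

lemma continuous_on_ext_cdf:
  assumes "continuous_on UNIV (cdf M)"
  shows "continuous_on UNIV (ext_cdf (cdf M))"
proof -
  let ?E = "ext_cdf (cdf M)"
  have E_ereal: "?E \<circ> ereal = cdf M"
    by (auto simp: ext_cdf_def)
  have "isCont ?E x" for x
  proof (cases x)
    case (real t)
    have "((?E \<circ> ereal) \<longlongrightarrow> ?E x) (at t)"
      using assms real by (simp add: E_ereal continuous_on_eq_continuous_at continuous_at ext_cdf_def)
    then show ?thesis
      unfolding real continuous_at unfolding at_ereal tendsto_compose_filtermap .
  next
    case PInf
    have "at x = at_left \<infinity>"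
      using PInf at_within_Iic_at_left[of "\<infinity>::ereal"] by (simp add: atMost_def)
    moreover have "((?E \<circ> ereal) \<longlongrightarrow> ?E \<infinity>) at_top"
      using cdf_lim_at_top_prob by (simp add: E_ereal ext_cdf_def)
    ultimately show ?thesis
      unfolding continuous_at PInf at_left_PInf tendsto_compose_filtermap by simp
  next
    case MInf
    have "at x = at_right (-\<infinity>)"
      using MInf at_within_Ici_at_right[of "-\<infinity>::ereal"] by (simp add: atLeast_def)
    moreover have "((?E \<circ> ereal) \<longlongrightarrow> ?E (-\<infinity>)) at_bot"
      using cdf_lim_at_bot by (simp add: E_ereal ext_cdf_def)
    ultimately show ?thesis
      unfolding continuous_at MInf at_right_MInf tendsto_compose_filtermap by simp
  qed
  then show ?thesis
    by (simp add: continuous_on_eq_continuous_at)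
qed

lemma range_ext_cdf:
  assumes "continuous_on UNIV (cdf M)"
  shows "range (ext_cdf (cdf M)) = {0..1}"
proof
  show "range (ext_cdf (cdf M)) \<subseteq> {0..1}"
    by (auto simp: ext_cdf_def cdf_nonneg cdf_bounded_prob)
  have "connected (range (ext_cdf (cdf M)))"
    by (intro connected_continuous_image continuous_on_ext_cdf assms) simp
  moreover have "ext_cdf (cdf M) (-\<infinity>) = 0" "ext_cdf (cdf M) \<infinity> = 1"
    by (simp_all add: ext_cdf_def)
  ultimately show "{0..1} \<subseteq> range (ext_cdf (cdf M))"
    by (metis connected_contains_Icc rangeI)
qed

end

lemma range_vec_lambda_componentwise:
  fixes g :: "'n::finite \<Rightarrow> 'a \<Rightarrow> 'b"
  shows "range (\<lambda>x::'a^'n. \<chi> j. g j (x $ j)) = {y. \<forall>j. y $ j \<in> range (g j)}"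
proof
  show "{y. \<forall>j. y $ j \<in> range (g j)} \<subseteq> range (\<lambda>x::'a^'n. \<chi> j. g j (x $ j))"
  proof
    fix y :: "'b^'n"
    assume "y \<in> {y. \<forall>j. y $ j \<in> range (g j)}"
    then have "\<forall>j. \<exists>a. y $ j = g j a"
      by blast
    then obtain x where "\<And>j. y $ j = g j (x j)"
      by metis
    then show "y \<in> range (\<lambda>x::'a^'n. \<chi> j. g j (x $ j))"
      by (intro image_eqI[of _ _ "\<chi> j. x j"]) (simp_all add: vec_eq_iff)
  qed
qed (simp add: image_subset_iff)

context
  fixes \<mu> :: "(real^'n::finite) measure"
  assumes prob: "prob_space \<mu>" and sets_\<mu>: "sets \<mu> = sets borel"
begin

lemma vec_nth_borel_measurable: "(\<lambda>y. y $ j) \<in> borel_measurable \<mu>"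
  unfolding measurable_cong_sets[OF sets_\<mu> refl]
  by (intro borel_measurable_continuous_onI continuous_on_component continuous_on_id)

lemma real_distribution_distr_vec_nth: "real_distribution (distr \<mu> borel (\<lambda>y. y $ j))"
  using prob_space.prob_space_distr[OF prob vec_nth_borel_measurable]
  by (simp add: real_distribution_def real_distribution_axioms_def)

lemma cdf_distr_vec_nth: "cdf (distr \<mu> borel (\<lambda>y. y $ j)) = (\<lambda>t. measure \<mu> {y. y $ j \<le> t})"
proof
  fix t
  have "space \<mu> = UNIV"
    using sets_eq_imp_space_eq[OF sets_\<mu>] by simp
  then show "cdf (distr \<mu> borel (\<lambda>y. y $ j)) t = measure \<mu> {y. y $ j \<le> t}"
    unfolding cdf_def by (simp add: measure_distr[OF vec_nth_borel_measurable] vimage_def)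
qed

end

theorem lemma4p2:
  fixes \<mu> :: "(real^'p::finite) measure"
    and H :: "real^'p \<Rightarrow> real"
    and F :: "'p \<Rightarrow> real \<Rightarrow> real"
    and Mn :: "nat \<Rightarrow> 'w measure"
    and Hhat :: "nat \<Rightarrow> 'w \<Rightarrow> real^'p \<Rightarrow> real"
    and Fhat :: "nat \<Rightarrow> 'p \<Rightarrow> 'w \<Rightarrow> real \<Rightarrow> real"
    and r :: "nat \<Rightarrow> real"
    and M :: "'v measure"
    and \<alpha> :: "'v \<Rightarrow> real^'p \<Rightarrow> real"
    and \<beta> :: "'p \<Rightarrow> 'v \<Rightarrow> real \<Rightarrow> real"
  assumes mu: "prob_space \<mu>" "sets \<mu> = sets borel"
    and H_def: "H = mcdf \<mu>"
    and F_def: "\<And>j. F j = (\<lambda>t. measure \<mu> {y. y $ j \<le> t})"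
    and F_cont: "\<And>j. continuous_on UNIV (F j)"
    and Mn: "\<And>n. prob_space (Mn n)"
    and Hhat: "\<And>n \<omega>. \<omega> \<in> space (Mn n) \<Longrightarrow> is_mcdf (Hhat n \<omega>)"
    and Fhat: "\<And>n j \<omega>. \<omega> \<in> space (Mn n) \<Longrightarrow> is_cdf (Fhat n j \<omega>)"
    and r_pos: "\<And>n. r n > 0"
    and r_lim: "filterlim r at_top sequentially"
    and M: "prob_space M"
    and \<alpha>_bdd: "\<And>\<omega>. \<omega> \<in> space M \<Longrightarrow> bounded (\<alpha> \<omega> ` cbox 0 1)"
    and \<beta>_bdd: "\<And>j \<omega>. \<omega> \<in> space M \<Longrightarrow> bounded (\<beta> j \<omega> ` {0..1})"
    and conv: "hj_weak_conv Mn
        (\<lambda>n \<omega> z. case z of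
            Inl x \<Rightarrow> r n * (Hhat n \<omega> x - H x)
          | Inr (j, t) \<Rightarrow> r n * (Fhat n j \<omega> t - F j t))
        M
        (\<lambda>\<omega> z. case z of
            Inl x \<Rightarrow> \<alpha> \<omega> (\<chi> j. F j (x $ j))
          | Inr (j, t) \<Rightarrow> \<beta> j \<omega> (F j t))"
    and \<alpha>F_cont: "AE \<omega> in M. continuous_on UNIV
        (\<lambda>x::ereal^'p. \<alpha> \<omega> (\<chi> j. ext_cdf (F j) (x $ j)))"
    and \<beta>F_cont: "\<And>j. AE \<omega> in M. continuous_on UNIV
        (\<lambda>x::ereal. \<beta> j \<omega> (ext_cdf (F j) x))"
  shows "AE \<omega> in M. continuous_on (cbox 0 1) (\<alpha> \<omega>) \<and>
                   (\<forall>j. continuous_on {0..1} (\<beta> j \<omega>))"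
proof -
  have F_cdf: "F j = cdf (distr \<mu> borel (\<lambda>y. y $ j))" for j
    using F_def cdf_distr_vec_nth[OF mu] by simp
  have ext_F_cont: "continuous_on UNIV (ext_cdf (F j))"
    and ext_F_range: "range (ext_cdf (F j)) = {0..1}" for j
    using real_distribution.continuous_on_ext_cdf real_distribution.range_ext_cdf
      real_distribution_distr_vec_nth[OF mu] F_cont F_cdf by metis+
  define G where "G x = (\<chi> j. ext_cdf (F j) (x $ j))" for x :: "ereal^'p"
  have G_cont: "continuous_on UNIV G"
    unfolding G_def
    by (intro continuous_on_vec_lambda continuous_on_compose2[OF ext_F_cont]
          continuous_on_component continuous_on_id) auto
  have "G ` UNIV = {y. \<forall>j. y $ j \<in> {0..1}}"
    using range_vec_lambda_componentwise[of "\<lambda>j. ext_cdf (F j)"] ext_F_range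
    by (simp add: G_def)
  also have "\<dots> = cbox 0 1"
    by (auto simp: mem_box_cart)
  finally have G_range: "G ` UNIV = cbox 0 1" .
  have compact_ereal_vec: "compact (UNIV :: (ereal^'p) set)"
    by (intro compact_UNIV_vec compact_UNIV)
  have "AE \<omega> in M. \<forall>j. continuous_on UNIV (\<lambda>x::ereal. \<beta> j \<omega> (ext_cdf (F j) x))"
    using \<beta>F_cont by (simp add: AE_all_countable)
  with \<alpha>F_cont show ?thesis
  proof eventually_elim
    case (elim \<omega>)
    have "continuous_on (cbox 0 1) (\<alpha> \<omega>)"
      by (rule continuous_on_through_compact_surjection[OF compact_ereal_vec G_cont G_range])
        (use elim(1) in \<open>simp add: G_def o_def\<close>)
    moreover have "continuous_on {0..1} (\<beta> j \<omega>)" for j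
      by (rule continuous_on_through_compact_surjection[OF compact_UNIV ext_F_cont[of j] ext_F_range[of j]])
        (use elim(2) in \<open>simp add: o_def\<close>)
    ultimately show ?case
      by blast
  qed
qed

end
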